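(* Let $\mathfrak{H}$ be a fat Hoffman graph with $\lambda_{\min}(\mathfrak{H})>-3$. Then $\lambda_{\min}(\mathcal{S}(\mathfrak{H}))\ge\lambda_{\min}(\mathfrak{H})+1$.
   Context: A Hoffman graph $\mathfrak{H}$ is a finite simple graph $H$ together with a labeling of each vertex as slim or fat, such that every fat vertex is adjacent to at least one slim vertex and the fat vertices are pairwise non-adjacent. $V^s(\mathfrak{H})$ denotes the set of slim vertices and $N^f_{\mathfrak{H}}(x)$ the set of fat neighbours of $x$. $\mathfrak{H}$ is fat if every slim vertex has at least one fat neighbour. Writing the adjacency matrix of $H$ with fat vertices last as $\begin{pmatrix}A_s & C\\ C^T & O\end{pmatrix}$, set $B(\mathfrak{H})=A_s-CC^T$; $\lambda_{\min}(\mathfrak{H})$ is the smallest eigenvalue of $B(\mathfrak{H})$. An edge-signed graph is a simple graph each of whose edges is labelled $+$ or $-$; its signed adjacency matrix $M(\mathcal{S})$ has entries $1$ for $(+)$-edges, $-1$ for $(-)$-edges, $0$ otherwise, and $\lambda_{\min}(\mathcal{S})$ is its smallest eigenvalue. The special graph $\mathcal{S}(\mathfrak{H})$ is the edge-signed graph with vertex set $V^s(\mathfrak{H})$ in which distinct $u,v$ are joined by a $(+)$-edge iff $u,v$ are adjacent in $\mathfrak{H}$ and have no common fat neighbour, by a $(-)$-edge iff $u,v$ are non-adjacent in $\mathfrak{H}$ and have a common fat neighbour, and are not joined otherwise. *)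

theory Defs
  imports Complex_Main
begin

(* A Hoffman graph: finite vertex set V, slim vertices S \<subseteq> V (fat vertices are V - S),
   simple graph given by a symmetric irreflexive adjacency relation E on V. *)
definition hoffman_graph :: "'a set \<Rightarrow> 'a set \<Rightarrow> ('a \<Rightarrow> 'a \<Rightarrow> bool) \<Rightarrow> bool" where
  "hoffman_graph V S E \<longleftrightarrow>
     finite V \<and> S \<subseteq> V \<and>
     (\<forall>u v. E u v \<longrightarrow> u \<in> V \<and> v \<in> V) \<and>
     (\<forall>u v. E u v \<longrightarrow> E v u) \<and>
     (\<forall>u. \<not> E u u) \<and>
     (\<forall>f\<in>V - S. \<forall>g\<in>V - S. \<not> E f g) \<and>
     (\<forall>f\<in>V - S. \<exists>s\<in>S. E f s)"

definition fat_nbrs :: "'a set \<Rightarrow> 'a set \<Rightarrow> ('a \<Rightarrow> 'a \<Rightarrow> bool) \<Rightarrow> 'a \<Rightarrow> 'a set" where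
  "fat_nbrs V S E x = {f \<in> V - S. E x f}"

definition fat_hoffman_graph :: "'a set \<Rightarrow> 'a set \<Rightarrow> ('a \<Rightarrow> 'a \<Rightarrow> bool) \<Rightarrow> bool" where
  "fat_hoffman_graph V S E \<longleftrightarrow> hoffman_graph V S E \<and> (\<forall>x\<in>S. fat_nbrs V S E x \<noteq> {})"

(* B(H) = A_s - C C^T, indexed by slim vertices: (C C^T)_{uv} = |N^f(u) \<inter> N^f(v)| *)
definition B_matrix :: "'a set \<Rightarrow> 'a set \<Rightarrow> ('a \<Rightarrow> 'a \<Rightarrow> bool) \<Rightarrow> 'a \<Rightarrow> 'a \<Rightarrow> real" where
  "B_matrix V S E u v =
     (if E u v then 1 else 0) - real (card (fat_nbrs V S E u \<inter> fat_nbrs V S E v))"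

(* signed adjacency matrix of the special graph S(H), on vertex set S *)
definition special_matrix :: "'a set \<Rightarrow> 'a set \<Rightarrow> ('a \<Rightarrow> 'a \<Rightarrow> bool) \<Rightarrow> 'a \<Rightarrow> 'a \<Rightarrow> real" where
  "special_matrix V S E u v =
     (if u \<noteq> v \<and> E u v \<and> fat_nbrs V S E u \<inter> fat_nbrs V S E v = {} then 1
      else if u \<noteq> v \<and> \<not> E u v \<and> fat_nbrs V S E u \<inter> fat_nbrs V S E v \<noteq> {} then -1
      else 0)"

(* eigenvalue of a real square matrix M indexed by the finite set I
   (real eigenvalues; for symmetric matrices these are all eigenvalues) *)
definition is_eigenvalue_on :: "'a set \<Rightarrow> ('a \<Rightarrow> 'a \<Rightarrow> real) \<Rightarrow> real \<Rightarrow> bool" where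
  "is_eigenvalue_on I M \<mu> \<longleftrightarrow>
     (\<exists>x :: 'a \<Rightarrow> real. (\<exists>v\<in>I. x v \<noteq> 0) \<and>
        (\<forall>u\<in>I. (\<Sum>v\<in>I. M u v * x v) = \<mu> * x u))"

definition lambda_min_on :: "'a set \<Rightarrow> ('a \<Rightarrow> 'a \<Rightarrow> real) \<Rightarrow> real" where
  "lambda_min_on I M = Min {\<mu>. is_eigenvalue_on I M \<mu>}"

definition lambda_min_hoffman :: "'a set \<Rightarrow> 'a set \<Rightarrow> ('a \<Rightarrow> 'a \<Rightarrow> bool) \<Rightarrow> real" where
  "lambda_min_hoffman V S E = lambda_min_on S (B_matrix V S E)"

definition lambda_min_special :: "'a set \<Rightarrow> 'a set \<Rightarrow> ('a \<Rightarrow> 'a \<Rightarrow> bool) \<Rightarrow> real" where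
  "lambda_min_special V S E = lambda_min_on S (special_matrix V S E)"

end

theory Submission
  imports Defs "HOL-Analysis.Analysis" "Jordan_Normal_Form.Char_Poly"
begin

(* Let B = B(H) and M = M(S(H)), both symmetric on the slim vertices S.
   (1) Rayleigh principle: for a real symmetric matrix on a finite nonempty index set,
       the smallest eigenvalue exists, it is attained by a minimiser of the Rayleigh
       quotient (compactness of the unit sphere plus a first-variation argument), and
       every quadratic form value is at least lambda_min times the squared norm.
       Consequently lambda_min is monotone with respect to the quadratic-form order.
   (2) Test vector e_u + e_v: two distinct slim vertices with at least two common fat
       neighbours force lambda_min(H) <= -3.
   (3) Hence, if lambda_min(H) > -3, distinct slim vertices share at most one fat
       neighbour, so B = M - D with D the diagonal matrix of fat degrees; fatness gives
       D >= I, i.e. x^T B x <= x^T M x - |x|^2, and (1) yields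
       lambda_min(H) <= lambda_min(S(H)) - 1. *)

section \<open>Quadratic forms of matrices indexed by a finite set\<close>

definition bform :: "'a set \<Rightarrow> ('a \<Rightarrow> 'a \<Rightarrow> real) \<Rightarrow> ('a \<Rightarrow> real) \<Rightarrow> ('a \<Rightarrow> real) \<Rightarrow> real" where
  "bform S A x z = (\<Sum>u\<in>S. \<Sum>v\<in>S. x u * A u v * z v)"

definition sqnorm :: "'a set \<Rightarrow> ('a \<Rightarrow> real) \<Rightarrow> real" where
  "sqnorm S x = (\<Sum>v\<in>S. x v * x v)"

definition symm_on :: "'a set \<Rightarrow> ('a \<Rightarrow> 'a \<Rightarrow> real) \<Rightarrow> bool" where
  "symm_on S A \<longleftrightarrow> (\<forall>u\<in>S. \<forall>v\<in>S. A u v = A v u)"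

lemma bform_cong:
  assumes "\<And>v. v \<in> S \<Longrightarrow> x v = x' v" "\<And>v. v \<in> S \<Longrightarrow> z v = z' v"
  shows "bform S A x z = bform S A x' z'"
  unfolding bform_def using assms by simp

lemma bform_commute: "symm_on S A \<Longrightarrow> bform S A x z = bform S A z x"
  unfolding bform_def symm_on_def
  by (subst sum.swap) (auto intro!: sum.cong simp: mult_ac)

lemma bform_as_inner: "bform S A x z = (\<Sum>u\<in>S. x u * (\<Sum>v\<in>S. A u v * z v))"
  unfolding bform_def by (simp add: sum_distrib_left mult.assoc)

lemma bform_add_scaled:
  assumes "symm_on S A"
  shows "bform S A (\<lambda>u. y u + t * w u) (\<lambda>u. y u + t * w u)
           = bform S A y y + 2 * t * bform S A w y + t * t * bform S A w w"
proof -
  have "bform S A (\<lambda>u. y u + t * w u) (\<lambda>u. y u + t * w u)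
          = bform S A y y + t * bform S A w y + t * bform S A y w + t * t * bform S A w w"
    unfolding bform_def by (simp add: algebra_simps sum.distrib sum_distrib_left)
  then show ?thesis using bform_commute[OF assms, of y w] by simp
qed

lemma sqnorm_add_scaled:
  "sqnorm S (\<lambda>u. y u + t * w u) = sqnorm S y + 2 * t * (\<Sum>u\<in>S. w u * y u) + t * t * sqnorm S w"
  unfolding sqnorm_def by (simp add: algebra_simps sum.distrib sum_distrib_left)

lemma bform_scale: "bform S A (\<lambda>v. c * x v) (\<lambda>v. c * x v) = c * c * bform S A x x"
  unfolding bform_def by (simp add: sum_distrib_left algebra_simps)

lemma sqnorm_scale: "sqnorm S (\<lambda>v. c * x v) = c * c * sqnorm S x"
  unfolding sqnorm_def by (simp add: sum_distrib_left algebra_simps)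

lemma sqnorm_nonneg: "sqnorm S x \<ge> 0"
  unfolding sqnorm_def by (simp add: sum_nonneg)

lemma sqnorm_eq_0_iff: "finite S \<Longrightarrow> sqnorm S x = 0 \<longleftrightarrow> (\<forall>v\<in>S. x v = 0)"
  unfolding sqnorm_def by (simp add: sum_nonneg_eq_0_iff)

lemma sqnorm_pos: "finite S \<Longrightarrow> v \<in> S \<Longrightarrow> x v \<noteq> 0 \<Longrightarrow> sqnorm S x > 0"
  using sqnorm_eq_0_iff[of S x] sqnorm_nonneg[of S x] by force

lemma bform_minus_diag:
  assumes "finite S"
  shows "bform S (\<lambda>u v. A u v - (if u = v then d u else 0)) x x
           = bform S A x x - (\<Sum>u\<in>S. d u * (x u * x u))"
proof -
  have "x u * (A u v - (if u = v then d u else 0)) * x v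
          = x u * A u v * x v - (if v = u then d u * (x u * x u) else 0)" for u v
    by (auto simp: algebra_simps)
  then show ?thesis
    unfolding bform_def using assms by (simp add: sum_subtractf)
qed

lemma bform_eigenvector:
  assumes "\<forall>u\<in>S. (\<Sum>v\<in>S. A u v * x v) = \<mu> * x u"
  shows "bform S A x x = \<mu> * sqnorm S x"
proof -
  have "bform S A x x = (\<Sum>u\<in>S. \<mu> * (x u * x u))"
    unfolding bform_as_inner using assms by (intro sum.cong) auto
  then show ?thesis unfolding sqnorm_def by (simp add: sum_distrib_left)
qed

section \<open>The Rayleigh principle\<close>

(* Eigenvalues of A on S are roots of the characteristic polynomial of A,
   read as a card(S) x card(S) matrix; so lambda_min_on is a Min over a finite set. *)
lemma finite_eigenvalues:
  assumes "finite S"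
  shows "finite {\<mu>. is_eigenvalue_on S A \<mu>}"
proof -
  define n where "n = card S"
  obtain h where h: "bij_betw h {0..<n} S" using ex_bij_betw_nat_finite[OF assms] n_def by blast
  define Am where "Am = Matrix.mat n n (\<lambda>(i,j). A (h i) (h j))"
  have Am: "Am \<in> carrier_mat n n" unfolding Am_def by simp
  have "{\<mu>. is_eigenvalue_on S A \<mu>} \<subseteq> {\<mu>. poly (char_poly Am) \<mu> = 0}"
  proof
    fix \<mu> assume "\<mu> \<in> {\<mu>. is_eigenvalue_on S A \<mu>}"
    then obtain x v where v: "v \<in> S" "x v \<noteq> 0"
      and eig: "\<forall>u\<in>S. (\<Sum>v\<in>S. A u v * x v) = \<mu> * x u"
      unfolding is_eigenvalue_on_def by auto
    define xv where "xv = Matrix.vec n (\<lambda>i. x (h i))"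
    obtain i where "i < n" "h i = v" using h v unfolding bij_betw_def by auto
    have nonzero: "xv \<noteq> 0\<^sub>v n"
    proof
      assume "xv = 0\<^sub>v n"
      then have "vec_index xv i = 0" using \<open>i < n\<close> by simp
      then show False using \<open>i < n\<close> \<open>h i = v\<close> v unfolding xv_def by simp
    qed
    have "Am *\<^sub>v xv = \<mu> \<cdot>\<^sub>v xv"
    proof (rule eq_vecI)
      fix k assume "k < dim_vec (\<mu> \<cdot>\<^sub>v xv)"
      then have k: "k < n" unfolding xv_def by simp
      then have "h k \<in> S" using h unfolding bij_betw_def by auto
      have "vec_index (Am *\<^sub>v xv) k = (\<Sum>j = 0..<n. A (h k) (h j) * x (h j))"
        using k unfolding Am_def xv_def by (simp add: scalar_prod_def)
      also have "\<dots> = (\<Sum>w\<in>S. A (h k) w * x w)"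
        using sum.reindex_bij_betw[OF h, of "\<lambda>w. A (h k) w * x w"] by simp
      also have "\<dots> = vec_index (\<mu> \<cdot>\<^sub>v xv) k" using eig \<open>h k \<in> S\<close> k unfolding xv_def by simp
      finally show "vec_index (Am *\<^sub>v xv) k = vec_index (\<mu> \<cdot>\<^sub>v xv) k" .
    qed (simp add: Am_def xv_def)
    then have "eigenvalue Am \<mu>"
      unfolding eigenvalue_def eigenvector_def using nonzero
      by (intro exI[of _ xv]) (simp add: xv_def Am_def)
    then show "\<mu> \<in> {\<mu>. poly (char_poly Am) \<mu> = 0}" using eigenvalue_root_char_poly[OF Am] by simp
  qed
  moreover have "char_poly Am \<noteq> 0" using degree_monic_char_poly[OF Am] by auto
  ultimately show ?thesis using poly_roots_finite finite_subset by blast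
qed

(* Homogeneity: a lower bound for the form on unit vectors supported on S extends to the
   bound rho |x|^2 <= x^T A x for all x, by rescaling x to a unit vector. *)
lemma rayleigh_bound_from_unit_vectors:
  assumes fin: "finite S"
    and unit: "\<And>z. sqnorm S z = 1 \<Longrightarrow> (\<forall>v. v \<notin> S \<longrightarrow> z v = 0) \<Longrightarrow> \<rho> \<le> bform S A z z"
  shows "\<rho> * sqnorm S x \<le> bform S A x x"
proof (cases "sqnorm S x = 0")
  case True
  then have "bform S A x x = bform S A (\<lambda>_. 0) (\<lambda>_. 0)"
    using sqnorm_eq_0_iff[OF fin] by (intro bform_cong) auto
  then show ?thesis using True by (simp add: bform_def)
next
  case False
  define c where "c = 1 / sqrt (sqnorm S x)"
  have c: "c * c * sqnorm S x = 1"
    using False sqnorm_nonneg[of S x] unfolding c_def by (simp add: field_simps)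
  define z where "z = (\<lambda>v. if v \<in> S then c * x v else 0)"
  have z_on_S: "\<And>v. v \<in> S \<Longrightarrow> z v = c * x v" unfolding z_def by simp
  have "sqnorm S z = 1" using c sqnorm_scale[of S c x] unfolding sqnorm_def z_def by simp
  then have "\<rho> \<le> bform S A z z" by (intro unit) (simp_all add: z_def)
  also have "bform S A z z = c * c * bform S A x x"
    using bform_cong[of S z "\<lambda>v. c * x v"] z_on_S bform_scale[of S A c x] by simp
  finally have "\<rho> \<le> c * c * bform S A x x" .
  then have "\<rho> * sqnorm S x \<le> c * c * bform S A x x * sqnorm S x"
    using sqnorm_nonneg by (rule mult_right_mono)
  also have "\<dots> = (c * c * sqnorm S x) * bform S A x x" by (simp add: algebra_simps)
  finally show ?thesis using c by simp
qed

(* The Rayleigh quotient attains its infimum: the unit vectors supported on S form a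
   compact subset of the box [-1,1]^S x {0}, on which the form is continuous. *)
lemma rayleigh_min_attained:
  assumes fin: "finite S" and ne: "S \<noteq> {}"
  obtains y where "sqnorm S y = 1" "\<And>x. bform S A y y * sqnorm S x \<le> bform S A x x"
proof -
  define K where "K = PiE UNIV (\<lambda>v. if v \<in> S then {-1..1::real} else {0})"
  have memK: "x \<in> K \<longleftrightarrow> (\<forall>v. x v \<in> (if v \<in> S then {-1..1} else {0}))" for x
    unfolding K_def by (simp add: PiE_iff)
  have "compactin (product_topology (\<lambda>_. euclidean) UNIV) K"
    unfolding K_def compactin_PiE by auto
  then have "compact K" by (simp add: euclidean_product_topology)
  have cont_sqnorm: "continuous_on X (sqnorm S)" for X
    unfolding sqnorm_def
    by (intro continuous_intros continuous_on_subset[OF continuous_on_product_coordinates]) auto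
  have cont_bform: "continuous_on X (\<lambda>x. bform S A x x)" for X
    unfolding bform_def
    by (intro continuous_intros continuous_on_subset[OF continuous_on_product_coordinates]) auto
  define T where "T = K \<inter> {x. sqnorm S x = 1}"
  have "closed {x. sqnorm S x = 1}" by (intro closed_Collect_eq cont_sqnorm continuous_intros)
  then have "compact T" unfolding T_def using \<open>compact K\<close> compact_Int_closed by blast
  have unit_in_T: "z \<in> T" if z: "sqnorm S z = 1" "\<forall>v. v \<notin> S \<longrightarrow> z v = 0" for z
  proof -
    have "\<bar>z v\<bar> \<le> 1" if "v \<in> S" for v
    proof -
      have "z v * z v \<le> sqnorm S z" unfolding sqnorm_def by (rule member_le_sum[OF that _ fin]) simp
      then show ?thesis using z(1) abs_square_le_1[of "z v"] by (simp add: power2_eq_square)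
    qed
    then show ?thesis using z unfolding T_def by (auto simp: memK abs_le_iff)
  qed
  obtain s where s: "s \<in> S" using ne by auto
  have "(\<lambda>v. if v = s then 1 else 0) \<in> T"
  proof (rule unit_in_T)
    show "sqnorm S (\<lambda>v. if v = s then 1 else 0) = 1" unfolding sqnorm_def using s fin
      by (simp add: if_distrib[of "\<lambda>z. z * _"] cong: if_cong)
  qed (use s in auto)
  then have "T \<noteq> {}" by blast
  then obtain y where "y \<in> T" and ymin: "\<And>z. z \<in> T \<Longrightarrow> bform S A y y \<le> bform S A z z"
    using continuous_attains_inf[OF \<open>compact T\<close> _ cont_bform] by blast
  have "sqnorm S y = 1" using \<open>y \<in> T\<close> unfolding T_def by simp
  moreover have "bform S A y y * sqnorm S x \<le> bform S A x x" for x
    by (intro rayleigh_bound_from_unit_vectors[OF fin] ymin unit_in_T)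
  ultimately show ?thesis using that by blast
qed

lemma nonneg_quadratic_linear_coeff:
  fixes W C :: real
  assumes nonneg: "\<And>t. 0 \<le> 2 * t * W + t * t * C" and "W \<ge> 0"
  shows "W = 0"
proof (rule ccontr)
  assume "W \<noteq> 0"
  with \<open>W \<ge> 0\<close> have "W > 0" by simp
  define a where "a = \<bar>C\<bar> + 1"
  have "a > 0" unfolding a_def by simp
  have "0 \<le> a * a * (2 * (- W / a) * W + (- W / a) * (- W / a) * C)"
    using nonneg[of "- W / a"] by simp
  also have "\<dots> = W * W * (C - 2 * a)" using \<open>a > 0\<close> by (simp add: field_simps)
  finally have "C - 2 * a \<ge> 0"
    using mult_pos_pos[OF \<open>W > 0\<close> \<open>W > 0\<close>] by (auto simp: zero_le_mult_iff)
  moreover have "C < a" unfolding a_def by (simp add: abs_if)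
  ultimately show False using \<open>a > 0\<close> by linarith
qed

(* Along y + t w with w = Ay - rho y the form-minus-rho-norm is
   2t|w|^2 + O(t^2) >= 0, which forces w = 0. *)
lemma rayleigh_minimiser_eigenvector:
  assumes fin: "finite S" and sym: "symm_on S A" and unit: "sqnorm S y = 1"
    and min: "\<And>x. bform S A y y * sqnorm S x \<le> bform S A x x"
  shows "\<forall>u\<in>S. (\<Sum>v\<in>S. A u v * y v) = bform S A y y * y u"
proof -
  define \<rho> where "\<rho> = bform S A y y"
  define w where "w = (\<lambda>u. (\<Sum>v\<in>S. A u v * y v) - \<rho> * y u)"
  have wy: "bform S A w y - \<rho> * (\<Sum>u\<in>S. w u * y u) = sqnorm S w"
  proof -
    have "bform S A w y - \<rho> * (\<Sum>u\<in>S. w u * y u)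
            = (\<Sum>u\<in>S. w u * ((\<Sum>v\<in>S. A u v * y v) - \<rho> * y u))"
      unfolding bform_as_inner by (simp add: sum_distrib_left sum_subtractf algebra_simps)
    then show ?thesis unfolding sqnorm_def w_def by simp
  qed
  have "0 \<le> 2 * t * sqnorm S w + t * t * (bform S A w w - \<rho> * sqnorm S w)" for t
  proof -
    have "\<rho> * sqnorm S (\<lambda>u. y u + t * w u) \<le> bform S A (\<lambda>u. y u + t * w u) (\<lambda>u. y u + t * w u)"
      unfolding \<rho>_def by (rule min)
    then show ?thesis
      unfolding sqnorm_add_scaled bform_add_scaled[OF sym] unit \<rho>_def[symmetric]
      using wy by (simp add: algebra_simps)
  qed
  then have "sqnorm S w = 0" using nonneg_quadratic_linear_coeff sqnorm_nonneg by blast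
  then show ?thesis using sqnorm_eq_0_iff[OF fin] unfolding w_def \<rho>_def by simp
qed

lemma lambda_min_on_rayleigh:
  assumes fin: "finite S" and ne: "S \<noteq> {}" and sym: "symm_on S A"
  shows "is_eigenvalue_on S A (lambda_min_on S A)"
    and "lambda_min_on S A * sqnorm S x \<le> bform S A x x"
proof -
  obtain y where unit: "sqnorm S y = 1" and min: "\<And>x. bform S A y y * sqnorm S x \<le> bform S A x x"
    using rayleigh_min_attained[OF fin ne] by blast
  define \<rho> where "\<rho> = bform S A y y"
  have "\<exists>v\<in>S. y v \<noteq> 0" using unit sqnorm_eq_0_iff[OF fin, of y] by auto
  then have eig: "is_eigenvalue_on S A \<rho>"
    unfolding is_eigenvalue_on_def \<rho>_def
    using rayleigh_minimiser_eigenvector[OF fin sym unit min] by blast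
  have "lambda_min_on S A = \<rho>"
    unfolding lambda_min_on_def
  proof (rule Min_eqI)
    fix \<mu> assume "\<mu> \<in> {\<mu>. is_eigenvalue_on S A \<mu>}"
    then obtain x v where "v \<in> S" "x v \<noteq> 0" and eig_x: "\<forall>u\<in>S. (\<Sum>v\<in>S. A u v * x v) = \<mu> * x u"
      unfolding is_eigenvalue_on_def by auto
    then have "sqnorm S x > 0" using sqnorm_pos[OF fin] by blast
    moreover have "\<rho> * sqnorm S x \<le> \<mu> * sqnorm S x"
      using min[of x] bform_eigenvector[OF eig_x] unfolding \<rho>_def by simp
    ultimately show "\<rho> \<le> \<mu>" by simp
  qed (use finite_eigenvalues[OF fin] eig in auto)
  then show "is_eigenvalue_on S A (lambda_min_on S A)"
    and "lambda_min_on S A * sqnorm S x \<le> bform S A x x"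
    using eig min[of x] unfolding \<rho>_def by simp_all
qed

(* Monotonicity: if x^T A x <= x^T A' x + c |x|^2 for all x, then
   lambda_min(A) <= lambda_min(A') + c  (test the inequality on an eigenvector of A'). *)
lemma lambda_min_on_mono:
  assumes fin: "finite S" and ne: "S \<noteq> {}" and sym: "symm_on S A" "symm_on S A'"
    and le: "\<And>x. bform S A x x \<le> bform S A' x x + c * sqnorm S x"
  shows "lambda_min_on S A \<le> lambda_min_on S A' + c"
proof -
  obtain x v where "v \<in> S" "x v \<noteq> 0"
    and eig: "\<forall>u\<in>S. (\<Sum>v\<in>S. A' u v * x v) = lambda_min_on S A' * x u"
    using lambda_min_on_rayleigh(1)[OF fin ne sym(2)] unfolding is_eigenvalue_on_def by blast
  then have "sqnorm S x > 0" using sqnorm_pos[OF fin] by blast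
  moreover have "lambda_min_on S A * sqnorm S x \<le> (lambda_min_on S A' + c) * sqnorm S x"
    using lambda_min_on_rayleigh(2)[OF fin ne sym(1), of x] le[of x] bform_eigenvector[OF eig]
    by (simp add: algebra_simps)
  ultimately show ?thesis by simp
qed

section \<open>Hoffman graphs and their special graphs\<close>

lemma hoffman_graph_finite: "hoffman_graph V S E \<Longrightarrow> finite V"
  unfolding hoffman_graph_def by (elim conjE)

lemma hoffman_graph_finite_slim: "hoffman_graph V S E \<Longrightarrow> finite S"
  using hoffman_graph_finite unfolding hoffman_graph_def by (meson finite_subset)

lemma finite_fat_nbrs: "hoffman_graph V S E \<Longrightarrow> finite (fat_nbrs V S E u)"
  unfolding fat_nbrs_def by (simp add: hoffman_graph_finite)

lemma hoffman_graph_adj_sym: "hoffman_graph V S E \<Longrightarrow> E u v \<longleftrightarrow> E v u"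
  unfolding hoffman_graph_def by (elim conjE) blast

lemma B_matrix_symm:
  assumes "hoffman_graph V S E"
  shows "symm_on S (B_matrix V S E)"
  unfolding symm_on_def B_matrix_def
  by (simp add: hoffman_graph_adj_sym[OF assms] Int_commute)

lemma special_matrix_symm:
  assumes "hoffman_graph V S E"
  shows "symm_on S (special_matrix V S E)"
  unfolding symm_on_def special_matrix_def
  by (simp add: hoffman_graph_adj_sym[OF assms] Int_commute eq_commute)

lemma B_matrix_diag:
  assumes "hoffman_graph V S E"
  shows "B_matrix V S E u u = - real (card (fat_nbrs V S E u))"
proof -
  have "\<not> E u u" using assms unfolding hoffman_graph_def by blast
  then show ?thesis by (simp add: B_matrix_def)
qed

(* Two distinct slim vertices with >= 2 common fat neighbours give, for x = e_u + e_v,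
   x^T B x = B_uu + 2 B_uv + B_vv <= -6 = -3 |x|^2, hence lambda_min(H) <= -3. *)
lemma two_common_fat_nbrs_lambda_min:
  assumes hg: "hoffman_graph V S E" and uv: "u \<in> S" "v \<in> S" "u \<noteq> v"
    and common: "card (fat_nbrs V S E u \<inter> fat_nbrs V S E v) \<ge> 2"
  shows "lambda_min_hoffman V S E \<le> -3"
proof -
  let ?N = "fat_nbrs V S E" and ?B = "B_matrix V S E"
  have fin: "finite S" using hoffman_graph_finite_slim[OF hg] .
  have "card (?N u \<inter> ?N v) \<le> card (?N u)" "card (?N u \<inter> ?N v) \<le> card (?N v)"
    by (intro card_mono finite_fat_nbrs[OF hg]; blast)+
  then have "card (?N u) \<ge> 2" "card (?N v) \<ge> 2" using common by linarith+
  moreover have "?B u v \<le> -1" using common by (simp add: B_matrix_def)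
  moreover have "?B v u = ?B u v" using B_matrix_symm[OF hg] uv unfolding symm_on_def by metis
  ultimately have diag_bound: "?B u u + ?B u v + ?B v u + ?B v v \<le> -6"
    using B_matrix_diag[OF hg] by simp
  define e where "e = (\<lambda>a. if a = u \<or> a = v then 1 else 0::real)"
  have pair_sum: "(\<Sum>a\<in>S. e a * f a) = f u + f v" for f :: "'a \<Rightarrow> real"
  proof -
    have "(\<Sum>a\<in>S. e a * f a) = (\<Sum>a\<in>{u, v}. e a * f a)"
      using fin uv by (intro sum.mono_neutral_right) (auto simp: e_def)
    then show ?thesis using uv by (simp add: e_def)
  qed
  have "bform S ?B e e = ?B u u + ?B u v + ?B v u + ?B v v"
    unfolding bform_as_inner pair_sum by (simp only: mult.commute[of "?B _ _" "e _"] pair_sum)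
  moreover have "sqnorm S e = 2" unfolding sqnorm_def using pair_sum[of e] by (simp add: e_def)
  moreover have "S \<noteq> {}" using uv by auto
  ultimately have "lambda_min_hoffman V S E * 2 \<le> -6"
    using lambda_min_on_rayleigh(2)[OF fin _ B_matrix_symm[OF hg], of e] diag_bound
    unfolding lambda_min_hoffman_def by simp
  then show ?thesis by simp
qed

(* If distinct slim vertices share at most one fat neighbour, then B(H) = M(S(H)) - D,
   where D is the diagonal matrix of fat degrees. *)
lemma B_matrix_eq_special_minus_degrees:
  assumes hg: "hoffman_graph V S E" and lambda: "lambda_min_hoffman V S E > -3"
    and uv: "u \<in> S" "v \<in> S"
  shows "B_matrix V S E u v
           = special_matrix V S E u v - (if u = v then real (card (fat_nbrs V S E u)) else 0)"
proof (cases "u = v")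
  case True
  then show ?thesis using B_matrix_diag[OF hg] by (simp add: special_matrix_def)
next
  case False
  let ?C = "fat_nbrs V S E u \<inter> fat_nbrs V S E v"
  have "card ?C \<le> 1" using two_common_fat_nbrs_lambda_min[OF hg uv False] lambda by linarith
  then consider "?C = {}" | "card ?C = 1" "?C \<noteq> {}"
    using finite_fat_nbrs[OF hg] by (cases "card ?C") auto
  then show ?thesis
    by cases (use False in \<open>simp_all add: B_matrix_def special_matrix_def\<close>)
qed

(* Fatness means every fat degree is >= 1, i.e. D >= I, so x^T B x <= x^T M x - |x|^2. *)
lemma B_form_le_special_form:
  assumes fat: "fat_hoffman_graph V S E" and lambda: "lambda_min_hoffman V S E > -3"
  shows "bform S (B_matrix V S E) x x \<le> bform S (special_matrix V S E) x x - sqnorm S x"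
proof -
  let ?d = "\<lambda>u. real (card (fat_nbrs V S E u))"
  have hg: "hoffman_graph V S E" using fat unfolding fat_hoffman_graph_def by blast
  have fin: "finite S" using hoffman_graph_finite_slim[OF hg] .
  have "bform S (B_matrix V S E) x x
          = bform S (\<lambda>u v. special_matrix V S E u v - (if u = v then ?d u else 0)) x x"
    unfolding bform_def
    using B_matrix_eq_special_minus_degrees[OF hg lambda] by (intro sum.cong) auto
  also have "\<dots> = bform S (special_matrix V S E) x x - (\<Sum>u\<in>S. ?d u * (x u * x u))"
    by (rule bform_minus_diag[OF fin])
  finally have "bform S (B_matrix V S E) x x
                  = bform S (special_matrix V S E) x x - (\<Sum>u\<in>S. ?d u * (x u * x u))" .
  moreover have "sqnorm S x \<le> (\<Sum>u\<in>S. ?d u * (x u * x u))"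
    unfolding sqnorm_def
  proof (rule sum_mono)
    fix u assume "u \<in> S"
    then have "?d u \<ge> 1"
      using fat finite_fat_nbrs[OF hg, of u] unfolding fat_hoffman_graph_def
      by (simp add: Suc_le_eq card_gt_0_iff)
    then show "x u * x u \<le> ?d u * (x u * x u)"
      using mult_right_mono[of 1 "?d u" "x u * x u"] by simp
  qed
  ultimately show ?thesis by simp
qed

theorem mainTheorem4:
  fixes V S :: "'a set" and E :: "'a \<Rightarrow> 'a \<Rightarrow> bool"
  assumes "fat_hoffman_graph V S E"
    and "S \<noteq> {}"
    and "lambda_min_hoffman V S E > -3"
  shows "lambda_min_special V S E \<ge> lambda_min_hoffman V S E + 1"
proof -
  have hg: "hoffman_graph V S E" using assms(1) unfolding fat_hoffman_graph_def by blast
  have "lambda_min_on S (B_matrix V S E) \<le> lambda_min_on S (special_matrix V S E) + (-1)"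
  proof (rule lambda_min_on_mono[OF hoffman_graph_finite_slim[OF hg] assms(2)
                                    B_matrix_symm[OF hg] special_matrix_symm[OF hg]])
    show "bform S (B_matrix V S E) x x \<le> bform S (special_matrix V S E) x x + (-1) * sqnorm S x" for x
      using B_form_le_special_form[OF assms(1,3)] by simp
  qed
  then show ?thesis unfolding lambda_min_hoffman_def lambda_min_special_def by simp
qed

end
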